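(* Let $G$ be a finite abelian group and $G_0\subseteq G$. Then $c_{\mathrm{gr}}(\mathcal{B}(G_0))\le2\,\mathsf{d}(G_0)+2\le2\,\mathsf{D}(G)\le2|G|$.
   Context: $G$ is written multiplicatively. $\mathcal{B}(G_0)=\{\alpha\in\mathbb{N}_0^{G_0}\mid\prod_{g\in G_0}g^{\alpha(g)}=1\}$, graded by $|\alpha|=\sum_g\alpha(g)$; it is a connected graded reduced affine monoid with finite atom set $\mathcal{A}(\mathcal{B}(G_0))$. Graded catenary degree: for $\alpha,\gamma\in\mathbb{N}_0^{\mathcal{A}}$ ($\mathcal{A}=\mathcal{A}(\mathcal{B}(G_0))$) let $a^{\alpha}=\sum_a\alpha(a)a$, $|\alpha|_{\mathrm{gr}}=\sum_a\alpha(a)|a|$, $\gcd(\alpha,\gamma)(a)=\min\{\alpha(a),\gamma(a)\}$, $d_{\mathrm{gr}}(\alpha,\gamma)=\max\{|\alpha-\gcd|_{\mathrm{gr}},|\gamma-\gcd|_{\mathrm{gr}}\}$; $c_{\mathrm{gr}}$ is the minimal $d$ such that whenever $a^{\alpha}=a^{\gamma}$ there is a chain $\alpha=\alpha^{(0)},\dots,\alpha^{(k)}=\gamma$ with $a^{\alpha^{(j)}}=a^{\alpha^{(j+1)}}$ and $d_{\mathrm{gr}}(\alpha^{(j)},\alpha^{(j+1)})\le d$. $\mathsf{d}(G_0)$ is the maximal length of a sequence over $G_0$ containing no nonempty product-one subsequence (equivalently the maximal $|\alpha|$, $\alpha\in\mathbb{N}_0^{G_0}$, with no atom $\gamma$ of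 $\mathcal{B}(G_0)$ satisfying $\gamma\le\alpha$ pointwise). $\mathsf{D}(G)=\max\{|\alpha|:\alpha\in\mathcal{A}(\mathcal{B}(G))\}$ is the Davenport constant. *)

theory Defs
  imports "HOL-Algebra.Algebra"
begin

text \<open>Elements of the monoid of product-one sequences B(G0): maps
  alpha : G -> nat supported on G0 whose (commutative) product is the identity.\<close>
definition BG :: "('a, 'b) monoid_scheme \<Rightarrow> 'a set \<Rightarrow> ('a \<Rightarrow> nat) set" where
  "BG G G0 = {\<alpha>. (\<forall>g. g \<notin> G0 \<longrightarrow> \<alpha> g = 0) \<and>
                   finprod G (\<lambda>g. g [^]\<^bsub>G\<^esub> \<alpha> g) G0 = \<one>\<^bsub>G\<^esub>}"

definition seqlen :: "'a set \<Rightarrow> ('a \<Rightarrow> nat) \<Rightarrow> nat" where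
  "seqlen G0 \<alpha> = (\<Sum>g\<in>G0. \<alpha> g)"

definition atomsB :: "('a, 'b) monoid_scheme \<Rightarrow> 'a set \<Rightarrow> ('a \<Rightarrow> nat) set" where
  "atomsB G G0 = {\<alpha> \<in> BG G G0. \<alpha> \<noteq> (\<lambda>_. 0) \<and>
     (\<forall>\<beta>\<in>BG G G0. \<forall>\<gamma>\<in>BG G G0. \<alpha> = (\<lambda>g. \<beta> g + \<gamma> g) \<longrightarrow>
         \<beta> = (\<lambda>_. 0) \<or> \<gamma> = (\<lambda>_. 0))}"

definition factZ :: "('a, 'b) monoid_scheme \<Rightarrow> 'a set \<Rightarrow> (('a \<Rightarrow> nat) \<Rightarrow> nat) set" where
  "factZ G G0 = {\<phi>. \<forall>a. a \<notin> atomsB G G0 \<longrightarrow> \<phi> a = 0}"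

definition fact_eval :: "('a, 'b) monoid_scheme \<Rightarrow> 'a set \<Rightarrow> (('a \<Rightarrow> nat) \<Rightarrow> nat) \<Rightarrow> ('a \<Rightarrow> nat)" where
  "fact_eval G G0 \<phi> = (\<lambda>g. \<Sum>a\<in>atomsB G G0. \<phi> a * a g)"

definition grlen :: "('a, 'b) monoid_scheme \<Rightarrow> 'a set \<Rightarrow> (('a \<Rightarrow> nat) \<Rightarrow> nat) \<Rightarrow> nat" where
  "grlen G G0 \<phi> = (\<Sum>a\<in>atomsB G G0. \<phi> a * seqlen G0 a)"

definition dgr :: "('a, 'b) monoid_scheme \<Rightarrow> 'a set \<Rightarrow> (('a \<Rightarrow> nat) \<Rightarrow> nat) \<Rightarrow> (('a \<Rightarrow> nat) \<Rightarrow> nat) \<Rightarrow> nat" where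
  "dgr G G0 \<phi> \<psi> = max (grlen G G0 (\<lambda>a. \<phi> a - min (\<phi> a) (\<psi> a)))
                          (grlen G G0 (\<lambda>a. \<psi> a - min (\<phi> a) (\<psi> a)))"

definition gr_catenary_prop :: "('a, 'b) monoid_scheme \<Rightarrow> 'a set \<Rightarrow> nat \<Rightarrow> bool" where
  "gr_catenary_prop G G0 d \<longleftrightarrow>
     (\<forall>\<phi>\<in>factZ G G0. \<forall>\<psi>\<in>factZ G G0. fact_eval G G0 \<phi> = fact_eval G G0 \<psi> \<longrightarrow>
        (\<exists>k (f :: nat \<Rightarrow> (('a \<Rightarrow> nat) \<Rightarrow> nat)). f 0 = \<phi> \<and> f k = \<psi> \<and>
           (\<forall>i\<le>k. f i \<in> factZ G G0) \<and>
           (\<forall>i<k. fact_eval G G0 (f i) = fact_eval G G0 (f (Suc i)) \<and>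
                  dgr G G0 (f i) (f (Suc i)) \<le> d)))"

definition cgr :: "('a, 'b) monoid_scheme \<Rightarrow> 'a set \<Rightarrow> nat" where
  "cgr G G0 = (LEAST d. gr_catenary_prop G G0 d)"

definition small_d :: "('a, 'b) monoid_scheme \<Rightarrow> 'a set \<Rightarrow> nat" where
  "small_d G G0 = Max {seqlen G0 \<alpha> | \<alpha>. (\<forall>g. g \<notin> G0 \<longrightarrow> \<alpha> g = 0) \<and>
                        \<not> (\<exists>\<gamma>\<in>atomsB G G0. \<forall>g. \<gamma> g \<le> \<alpha> g)}"

definition davenport :: "('a, 'b) monoid_scheme \<Rightarrow> nat" where
  "davenport G = Max {seqlen (carrier G) \<alpha> | \<alpha>. \<alpha> \<in> atomsB G (carrier G)}"

end

theory Submission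
  imports Defs
begin

text \<open>The catenary bound is proved by induction on \<open>|\<alpha>|\<close>. If \<open>|\<alpha>| \<le> 2 d(G\<^sub>0) + 2\<close>, any two
  factorizations of \<open>\<alpha>\<close> are at graded distance at most \<open>|\<alpha>|\<close>. Otherwise two factorizations sharing an
  atom \<open>x\<close> are connected by induction applied to \<open>\<alpha> - x\<close>, and two atoms whose sum divides \<open>\<alpha>\<close> occur
  together in one factorization, so it suffices to link any two atoms of \<open>\<alpha>\<close> by such steps. Every
  subsequence longer than \<open>d(G\<^sub>0)\<close> contains an atom and every atom has length at most \<open>d(G\<^sub>0) + 1\<close>.
  As \<open>|\<alpha>| \<ge> 2 d(G\<^sub>0) + 3\<close>, atoms inside a subsequence of length \<open>d(G\<^sub>0) + 2\<close> are linked through an atom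
  of its complement; windows of length \<open>d(G\<^sub>0) + 1\<close> around the two atoms are then moved into each
  other one term at a time.

  For \<open>d(G\<^sub>0) + 1 \<le> D(G) \<le> |G|\<close>: a product-one free sequence has at least \<open>|\<alpha>| + 1\<close> distinct
  subsequence products, and appending the inverse of its product turns it into an atom.\<close>

definition supp_on :: "'a set \<Rightarrow> ('a \<Rightarrow> nat) \<Rightarrow> bool" where
  "supp_on S \<alpha> \<longleftrightarrow> (\<forall>g. g \<notin> S \<longrightarrow> \<alpha> g = 0)"

definition seq_prod :: "('a, 'b) monoid_scheme \<Rightarrow> 'a set \<Rightarrow> ('a \<Rightarrow> nat) \<Rightarrow> 'a" where
  "seq_prod G S \<alpha> = finprod G (\<lambda>g. g [^]\<^bsub>G\<^esub> \<alpha> g) S"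

lemma supp_on_le: "supp_on S \<alpha> \<Longrightarrow> \<beta> \<le> \<alpha> \<Longrightarrow> supp_on S \<beta>"
  unfolding supp_on_def le_fun_def by (metis le_zero_eq)

lemma supp_on_diff: "supp_on S \<alpha> \<Longrightarrow> supp_on S (\<lambda>g. \<alpha> g - \<beta> g)"
  unfolding supp_on_def by simp

lemma seqlen_add: "finite S \<Longrightarrow> seqlen S (\<lambda>g. \<alpha> g + \<beta> g) = seqlen S \<alpha> + seqlen S \<beta>"
  unfolding seqlen_def by (simp add: sum.distrib)

lemma seqlen_mono: "\<beta> \<le> \<alpha> \<Longrightarrow> seqlen S \<beta> \<le> seqlen S \<alpha>"
  unfolding seqlen_def le_fun_def by (simp add: sum_mono)

lemma seqlen_diff:
  assumes "finite S" "\<beta> \<le> \<alpha>"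
  shows "seqlen S (\<lambda>g. \<alpha> g - \<beta> g) = seqlen S \<alpha> - seqlen S \<beta>"
proof -
  have "\<alpha> = (\<lambda>g. (\<alpha> g - \<beta> g) + \<beta> g)"
    using assms(2) by (auto simp: le_fun_def)
  then have "seqlen S \<alpha> = seqlen S (\<lambda>g. \<alpha> g - \<beta> g) + seqlen S \<beta>"
    by (metis (no_types) seqlen_add[OF assms(1)])
  then show ?thesis by simp
qed

lemma seqlen_eq_0_iff: "finite S \<Longrightarrow> supp_on S \<alpha> \<Longrightarrow> seqlen S \<alpha> = 0 \<longleftrightarrow> \<alpha> = (\<lambda>_. 0)"
  unfolding seqlen_def supp_on_def by (auto simp: fun_eq_iff)

lemma seqlen_less:
  assumes "finite S" "supp_on S \<alpha>" "\<beta> \<le> \<alpha>" "\<beta> \<noteq> \<alpha>"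
  shows "seqlen S \<beta> < seqlen S \<alpha>"
proof -
  obtain g where g: "\<beta> g < \<alpha> g"
    using assms(3,4) by (auto simp: le_fun_def fun_eq_iff intro: le_neq_trans)
  then have "g \<in> S" using assms(2) by (auto simp: supp_on_def)
  then show ?thesis
    unfolding seqlen_def using assms(1,3) g by (intro sum_strict_mono_ex1) (auto simp: le_fun_def)
qed

lemma seqlen_supp_subset: "finite T \<Longrightarrow> S \<subseteq> T \<Longrightarrow> supp_on S \<alpha> \<Longrightarrow> seqlen T \<alpha> = seqlen S \<alpha>"
  unfolding seqlen_def supp_on_def by (intro sum.mono_neutral_right) auto

lemma seqlen_incr: "finite S \<Longrightarrow> g \<in> S \<Longrightarrow> seqlen S (\<alpha>(g := Suc (\<alpha> g))) = Suc (seqlen S \<alpha>)"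
  unfolding seqlen_def by (simp add: sum.remove)

lemma seqlen_decr:
  assumes "finite S" "g \<in> S" "0 < \<alpha> g"
  shows "seqlen S \<alpha> = Suc (seqlen S (\<alpha>(g := \<alpha> g - 1)))"
  using seqlen_incr[OF assms(1,2), of "\<alpha>(g := \<alpha> g - 1)"] assms(3) by simp

lemma exists_between_of_seqlen:
  assumes "finite S" "supp_on S \<alpha>" "\<beta> \<le> \<alpha>" "seqlen S \<beta> \<le> k" "k \<le> seqlen S \<alpha>"
  shows "\<exists>\<gamma>. \<beta> \<le> \<gamma> \<and> \<gamma> \<le> \<alpha> \<and> seqlen S \<gamma> = k"
  using assms(3-)
proof (induction "k - seqlen S \<beta>" arbitrary: \<beta>)
  case 0
  then show ?case by (intro exI[of _ \<beta>]) auto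
next
  case (Suc m)
  then have "\<beta> \<noteq> \<alpha>" by auto
  then obtain g where g: "\<beta> g < \<alpha> g"
    using Suc.prems(1) by (auto simp: le_fun_def fun_eq_iff intro: le_neq_trans)
  then have "g \<in> S" using assms(2) by (auto simp: supp_on_def)
  define \<beta>' where "\<beta>' = \<beta>(g := Suc (\<beta> g))"
  have len: "seqlen S \<beta>' = Suc (seqlen S \<beta>)"
    unfolding \<beta>'_def using seqlen_incr[OF assms(1) \<open>g \<in> S\<close>] .
  have "\<beta> \<le> \<beta>'" "\<beta>' \<le> \<alpha>"
    using Suc.prems(1) g by (auto simp: \<beta>'_def le_fun_def)
  moreover have "\<exists>\<gamma>. \<beta>' \<le> \<gamma> \<and> \<gamma> \<le> \<alpha> \<and> seqlen S \<gamma> = k"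
  proof (rule Suc.hyps(1))
    show "m = k - seqlen S \<beta>'" "seqlen S \<beta>' \<le> k" using Suc.hyps(2) len by simp_all
  qed (use \<open>\<beta>' \<le> \<alpha>\<close> Suc.prems(3) in auto)
  then obtain \<gamma> where "\<beta>' \<le> \<gamma>" "\<gamma> \<le> \<alpha>" "seqlen S \<gamma> = k" by blast
  ultimately show ?case using order_trans by blast
qed

text \<open>Exchanging one unit of \<open>\<gamma>\<close> at a place where \<open>\<gamma>\<close> exceeds \<open>\<gamma>'\<close> for one at a place
  where it falls short moves \<open>\<gamma>\<close> closer to \<open>\<gamma>'\<close>.\<close>
lemma exists_exchange_step:
  assumes S: "finite S" and supp: "supp_on S \<alpha>" and le: "\<gamma> \<le> \<alpha>" "\<gamma>' \<le> \<alpha>"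
    and len: "seqlen S \<gamma> = seqlen S \<gamma>'" and not_le: "\<not> \<gamma> \<le> \<gamma>'"
  shows "\<exists>\<gamma>1 \<epsilon>. \<gamma> \<le> \<epsilon> \<and> \<gamma>1 \<le> \<epsilon> \<and> \<epsilon> \<le> \<alpha> \<and> seqlen S \<epsilon> = Suc (seqlen S \<gamma>)
      \<and> seqlen S \<gamma>1 = seqlen S \<gamma>
      \<and> seqlen S (\<lambda>g. \<gamma>1 g - \<gamma>' g) < seqlen S (\<lambda>g. \<gamma> g - \<gamma>' g)"
proof -
  have supp': "supp_on S \<gamma>'" "supp_on S \<gamma>" using supp_on_le[OF supp] le by auto
  obtain s where s: "\<gamma>' s < \<gamma> s" using not_le by (meson le_funI not_le_imp_less)
  have "\<exists>t. \<gamma> t < \<gamma>' t"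
  proof (rule ccontr)
    assume "\<nexists>t. \<gamma> t < \<gamma>' t"
    then have "\<gamma>' \<le> \<gamma>" by (auto simp: le_fun_def not_less)
    then have "\<gamma>' = \<gamma>" using seqlen_less[OF S supp'(2)] len by fastforce
    then show False using not_le by simp
  qed
  then obtain t where t: "\<gamma> t < \<gamma>' t" by blast
  have "s \<noteq> t" "s \<in> S" "t \<in> S" using s t supp' by (auto simp: supp_on_def)
  define \<epsilon> where "\<epsilon> = \<gamma>(t := Suc (\<gamma> t))"
  define \<gamma>1 where "\<gamma>1 = \<epsilon>(s := \<epsilon> s - 1)"
  have "\<gamma> \<le> \<epsilon>" "\<gamma>1 \<le> \<epsilon>" by (auto simp: \<epsilon>_def \<gamma>1_def le_fun_def)
  moreover have "\<epsilon> \<le> \<alpha>" using le t by (auto simp: \<epsilon>_def le_fun_def dest: spec[of _ t])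
  moreover have "seqlen S \<epsilon> = Suc (seqlen S \<gamma>)"
    unfolding \<epsilon>_def using seqlen_incr[OF S \<open>t \<in> S\<close>] .
  moreover have "seqlen S \<epsilon> = Suc (seqlen S \<gamma>1)"
    unfolding \<gamma>1_def using seqlen_decr[OF S \<open>s \<in> S\<close>] s \<open>s \<noteq> t\<close> by (simp add: \<epsilon>_def)
  moreover have "seqlen S (\<lambda>g. \<gamma> g - \<gamma>' g) = Suc (seqlen S (\<lambda>g. \<gamma>1 g - \<gamma>' g))"
  proof -
    have "(\<lambda>g. \<gamma>1 g - \<gamma>' g) = (\<lambda>g. \<gamma> g - \<gamma>' g)(s := (\<gamma> s - \<gamma>' s) - 1)"
      using s t \<open>s \<noteq> t\<close> by (auto simp: \<gamma>1_def \<epsilon>_def)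
    then show ?thesis using seqlen_decr[OF S \<open>s \<in> S\<close>, of "\<lambda>g. \<gamma> g - \<gamma>' g"] s by simp
  qed
  ultimately show ?thesis by auto
qed

definition product_one_free :: "('a, 'b) monoid_scheme \<Rightarrow> 'a set \<Rightarrow> ('a \<Rightarrow> nat) \<Rightarrow> bool" where
  "product_one_free G S \<alpha> \<longleftrightarrow> supp_on S \<alpha> \<and> (\<forall>\<beta>\<in>BG G S. \<beta> \<le> \<alpha> \<longrightarrow> \<beta> = (\<lambda>_. 0))"

locale finite_comm_group = comm_group +
  assumes finite_carrier: "finite (carrier G)"
begin

lemma finite_subset_carrier: "S \<subseteq> carrier G \<Longrightarrow> finite S"
  using finite_subset finite_carrier by blast

lemma seq_prod_closed: "S \<subseteq> carrier G \<Longrightarrow> seq_prod G S \<alpha> \<in> carrier G"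
  unfolding seq_prod_def by (intro finprod_closed) auto

lemma seq_prod_zero: "seq_prod G S (\<lambda>_. 0) = \<one>"
  unfolding seq_prod_def by simp

lemma seq_prod_add:
  assumes "S \<subseteq> carrier G"
  shows "seq_prod G S (\<lambda>g. \<alpha> g + \<beta> g) = seq_prod G S \<alpha> \<otimes> seq_prod G S \<beta>"
proof -
  have "seq_prod G S (\<lambda>g. \<alpha> g + \<beta> g) = finprod G (\<lambda>g. g [^] \<alpha> g \<otimes> g [^] \<beta> g) S"
    unfolding seq_prod_def using assms by (intro finprod_cong') (auto simp: nat_pow_mult)
  also have "\<dots> = seq_prod G S \<alpha> \<otimes> seq_prod G S \<beta>"
    unfolding seq_prod_def using assms by (intro finprod_multf) auto
  finally show ?thesis .
qed

lemma seq_prod_diff: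
  assumes "S \<subseteq> carrier G" "\<beta> \<le> \<alpha>"
  shows "seq_prod G S \<alpha> = seq_prod G S (\<lambda>g. \<alpha> g - \<beta> g) \<otimes> seq_prod G S \<beta>"
proof -
  have "\<alpha> = (\<lambda>g. (\<alpha> g - \<beta> g) + \<beta> g)" using assms(2) by (auto simp: le_fun_def)
  then show ?thesis by (metis (no_types) seq_prod_add[OF assms(1)])
qed

lemma seq_prod_supp_subset:
  assumes "S \<subseteq> T" "T \<subseteq> carrier G" "supp_on S \<alpha>"
  shows "seq_prod G T \<alpha> = seq_prod G S \<alpha>"
  unfolding seq_prod_def using assms finite_subset_carrier[OF assms(2)]
  by (intro finprod_mono_neutral_cong_right) (auto simp: supp_on_def)

lemma seq_prod_incr:
  assumes "h \<in> carrier G"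
  shows "seq_prod G (carrier G) (\<alpha>(h := Suc (\<alpha> h))) = seq_prod G (carrier G) \<alpha> \<otimes> h"
proof -
  have "\<alpha>(h := Suc (\<alpha> h)) = (\<lambda>g. \<alpha> g + (if g = h then 1 else 0))" by auto
  then have "seq_prod G (carrier G) (\<alpha>(h := Suc (\<alpha> h)))
      = seq_prod G (carrier G) \<alpha> \<otimes> seq_prod G (carrier G) (\<lambda>g. if g = h then 1 else 0)"
    by (simp add: seq_prod_add)
  also have "seq_prod G (carrier G) (\<lambda>g. if g = h then 1 else 0) = seq_prod G {h} (\<lambda>g. if g = h then 1 else 0)"
    using assms by (intro seq_prod_supp_subset) (auto simp: supp_on_def)
  finally show ?thesis using assms by (simp add: seq_prod_def)
qed

lemma mem_BG_iff: "\<alpha> \<in> BG G S \<longleftrightarrow> supp_on S \<alpha> \<and> seq_prod G S \<alpha> = \<one>"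
  unfolding BG_def seq_prod_def supp_on_def by auto

lemma BG_add:
  "S \<subseteq> carrier G \<Longrightarrow> \<alpha> \<in> BG G S \<Longrightarrow> \<beta> \<in> BG G S \<Longrightarrow> (\<lambda>g. \<alpha> g + \<beta> g) \<in> BG G S"
  by (auto simp: mem_BG_iff supp_on_def seq_prod_add)

lemma BG_diff:
  assumes "S \<subseteq> carrier G" "\<alpha> \<in> BG G S" "\<beta> \<in> BG G S" "\<beta> \<le> \<alpha>"
  shows "(\<lambda>g. \<alpha> g - \<beta> g) \<in> BG G S"
  using seq_prod_diff[OF assms(1,4)] seq_prod_closed[OF assms(1)] assms(2,3)
  by (simp add: mem_BG_iff supp_on_diff)

lemma mem_atomsB_iff:
  assumes S: "S \<subseteq> carrier G"
  shows "x \<in> atomsB G S \<longleftrightarrow>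
    x \<in> BG G S \<and> x \<noteq> (\<lambda>_. 0) \<and> (\<forall>\<beta>\<in>BG G S. \<beta> \<le> x \<longrightarrow> \<beta> = (\<lambda>_. 0) \<or> \<beta> = x)"
proof -
  have "(\<forall>\<beta>\<in>BG G S. \<forall>\<gamma>\<in>BG G S. x = (\<lambda>g. \<beta> g + \<gamma> g) \<longrightarrow> \<beta> = (\<lambda>_. 0) \<or> \<gamma> = (\<lambda>_. 0))
      \<longleftrightarrow> (\<forall>\<beta>\<in>BG G S. \<beta> \<le> x \<longrightarrow> \<beta> = (\<lambda>_. 0) \<or> \<beta> = x)" if "x \<in> BG G S"
  proof (intro iffI ballI impI)
    fix \<beta> assume split: "\<forall>\<beta>\<in>BG G S. \<forall>\<gamma>\<in>BG G S. x = (\<lambda>g. \<beta> g + \<gamma> g) \<longrightarrow> \<beta> = (\<lambda>_. 0) \<or> \<gamma> = (\<lambda>_. 0)"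
      and \<beta>: "\<beta> \<in> BG G S" "\<beta> \<le> x"
    have "x = (\<lambda>g. \<beta> g + (x g - \<beta> g))" using \<beta>(2) by (auto simp: le_fun_def)
    then have "\<beta> = (\<lambda>_. 0) \<or> (\<lambda>g. x g - \<beta> g) = (\<lambda>_. 0)"
      using split[rule_format, OF \<beta>(1) BG_diff[OF S that \<beta>]] by blast
    moreover have "x \<le> \<beta>" if "(\<lambda>g. x g - \<beta> g) = (\<lambda>_. 0)"
      using that by (auto simp: fun_eq_iff le_fun_def)
    ultimately show "\<beta> = (\<lambda>_. 0) \<or> \<beta> = x"
      using \<beta>(2) antisym by blast
  next
    fix \<beta> \<gamma> assume "\<forall>\<beta>\<in>BG G S. \<beta> \<le> x \<longrightarrow> \<beta> = (\<lambda>_. 0) \<or> \<beta> = x"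
      and "\<beta> \<in> BG G S" "x = (\<lambda>g. \<beta> g + \<gamma> g)"
    then show "\<beta> = (\<lambda>_. 0) \<or> \<gamma> = (\<lambda>_. 0)" by (auto simp: le_fun_def fun_eq_iff)
  qed
  then show ?thesis unfolding atomsB_def by blast
qed

lemma atom_nonzero:
  assumes "x \<in> atomsB G S"
  obtains g where "g \<in> S" "0 < x g"
proof -
  have "x \<noteq> (\<lambda>_. 0)" "supp_on S x" using assms by (auto simp: atomsB_def mem_BG_iff)
  then obtain g where "x g \<noteq> 0" by auto
  then show thesis using that \<open>supp_on S x\<close> by (metis supp_on_def neq0_conv)
qed

lemma exists_atom_le:
  assumes S: "S \<subseteq> carrier G" and "\<alpha> \<in> BG G S" "\<alpha> \<noteq> (\<lambda>_. 0)"
  shows "\<exists>x\<in>atomsB G S. x \<le> \<alpha>"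
  using assms(2,3)
proof (induction "seqlen S \<alpha>" arbitrary: \<alpha> rule: less_induct)
  case less
  show ?case
  proof (cases "\<alpha> \<in> atomsB G S")
    case False
    then obtain \<beta> where \<beta>: "\<beta> \<in> BG G S" "\<beta> \<le> \<alpha>" "\<beta> \<noteq> (\<lambda>_. 0)" "\<beta> \<noteq> \<alpha>"
      using mem_atomsB_iff[OF S] less.prems by blast
    then have "seqlen S \<beta> < seqlen S \<alpha>"
      using seqlen_less[OF finite_subset_carrier[OF S]] less.prems by (auto simp: mem_BG_iff)
    then show ?thesis using less.hyps \<beta> order_trans by blast
  qed auto
qed

lemma product_one_freeD:
  "product_one_free G S \<alpha> \<Longrightarrow> \<beta> \<in> BG G S \<Longrightarrow> \<beta> \<le> \<alpha> \<Longrightarrow> \<beta> = (\<lambda>_. 0)"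
  unfolding product_one_free_def by blast

lemma product_one_free_iff_no_atom_le:
  assumes S: "S \<subseteq> carrier G" and "supp_on S \<alpha>"
  shows "product_one_free G S \<alpha> \<longleftrightarrow> \<not> (\<exists>x\<in>atomsB G S. x \<le> \<alpha>)"
proof
  show "\<not> (\<exists>x\<in>atomsB G S. x \<le> \<alpha>)" if "product_one_free G S \<alpha>"
    using product_one_freeD[OF that] by (auto simp: atomsB_def)
  show "product_one_free G S \<alpha>" if no_atom: "\<not> (\<exists>x\<in>atomsB G S. x \<le> \<alpha>)"
    unfolding product_one_free_def
  proof (intro conjI ballI impI)
    fix \<beta> assume "\<beta> \<in> BG G S" "\<beta> \<le> \<alpha>"
    then show "\<beta> = (\<lambda>_. 0)" using exists_atom_le[OF S] no_atom order_trans by blast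
  qed fact
qed

lemma product_one_free_superset:
  assumes "S \<subseteq> T" "T \<subseteq> carrier G" "product_one_free G S \<alpha>"
  shows "product_one_free G T \<alpha>"
proof -
  have "\<beta> = (\<lambda>_. 0)" if "\<beta> \<in> BG G T" "\<beta> \<le> \<alpha>" for \<beta>
  proof -
    have "supp_on S \<beta>" using supp_on_le that(2) assms(3) by (auto simp: product_one_free_def)
    then have "\<beta> \<in> BG G S" using that(1) seq_prod_supp_subset[OF assms(1,2)] by (simp add: mem_BG_iff)
    then show ?thesis using that(2) assms(3) by (auto simp: product_one_free_def)
  qed
  then show ?thesis using assms by (auto simp: product_one_free_def supp_on_def)
qed

text \<open>The products of the subsequences of \<open>\<alpha>\<close> are at least \<open>|\<alpha>| + 1\<close> many: dropping one term
  from \<open>\<alpha>\<close> loses at least the product of \<open>\<alpha>\<close> itself, for otherwise the complement of a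
  proper subsequence with the same product would be a nonempty product-one subsequence.\<close>
lemma seqlen_less_card_subseq_prods:
  assumes S: "S \<subseteq> carrier G" and "product_one_free G S \<alpha>"
  shows "seqlen S \<alpha> < card (seq_prod G S ` {\<beta>. \<beta> \<le> \<alpha>})"
  using assms(2)
proof (induction "seqlen S \<alpha>" arbitrary: \<alpha> rule: less_induct)
  case less
  have fin: "finite (seq_prod G S ` {\<beta>. \<beta> \<le> \<alpha>'})" for \<alpha>'
    using seq_prod_closed[OF S] by (intro finite_subset[OF _ finite_carrier]) auto
  show ?case
  proof (cases "\<alpha> = (\<lambda>_. 0)")
    case True
    then show ?thesis using fin[of \<alpha>] by (auto simp: seqlen_def card_gt_0_iff)
  next
    case False
    then obtain g where g: "0 < \<alpha> g" by (auto simp: fun_eq_iff)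
    then have "g \<in> S" using less.prems by (auto simp: product_one_free_def supp_on_def)
    define \<alpha>' where "\<alpha>' = \<alpha>(g := \<alpha> g - 1)"
    have "\<alpha>' \<le> \<alpha>" by (auto simp: \<alpha>'_def le_fun_def)
    have len: "seqlen S \<alpha> = Suc (seqlen S \<alpha>')"
      unfolding \<alpha>'_def using seqlen_decr[of S g \<alpha>] finite_subset_carrier[OF S] \<open>g \<in> S\<close> g by blast
    have "product_one_free G S \<alpha>'"
      using less.prems \<open>\<alpha>' \<le> \<alpha>\<close> supp_on_le product_one_freeD order_trans
      unfolding product_one_free_def by blast
    then have IH: "seqlen S \<alpha>' < card (seq_prod G S ` {\<beta>. \<beta> \<le> \<alpha>'})"
      using less.hyps len by simp
    have notin: "seq_prod G S \<alpha> \<notin> seq_prod G S ` {\<beta>. \<beta> \<le> \<alpha>'}"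
    proof
      assume "seq_prod G S \<alpha> \<in> seq_prod G S ` {\<beta>. \<beta> \<le> \<alpha>'}"
      then obtain \<beta> where \<beta>: "\<beta> \<le> \<alpha>'" "seq_prod G S \<alpha> = seq_prod G S \<beta>" by auto
      then have "\<beta> \<le> \<alpha>" using \<open>\<alpha>' \<le> \<alpha>\<close> by simp
      have "seq_prod G S (\<lambda>h. \<alpha> h - \<beta> h) = \<one>"
        using seq_prod_diff[OF S \<open>\<beta> \<le> \<alpha>\<close>] \<beta>(2) seq_prod_closed[OF S] by simp
      then have "(\<lambda>h. \<alpha> h - \<beta> h) \<in> BG G S"
        using less.prems by (simp add: mem_BG_iff product_one_free_def supp_on_diff)
      then have "(\<lambda>h. \<alpha> h - \<beta> h) = (\<lambda>_. 0)"
        by (rule product_one_freeD[OF less.prems]) (simp add: le_fun_def)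
      moreover have "\<beta> g < \<alpha> g" using \<beta>(1) g by (auto simp: \<alpha>'_def le_fun_def dest: spec[of _ g])
      ultimately show False by (auto dest: fun_cong[of _ _ g])
    qed
    have "insert (seq_prod G S \<alpha>) (seq_prod G S ` {\<beta>. \<beta> \<le> \<alpha>'}) \<subseteq> seq_prod G S ` {\<beta>. \<beta> \<le> \<alpha>}"
      using \<open>\<alpha>' \<le> \<alpha>\<close> order_trans by blast
    from card_mono[OF fin this] have "Suc (card (seq_prod G S ` {\<beta>. \<beta> \<le> \<alpha>'})) \<le> card (seq_prod G S ` {\<beta>. \<beta> \<le> \<alpha>})"
      using card_insert_disjoint[OF fin notin] by simp
    then show ?thesis using IH len by simp
  qed
qed

lemma product_one_free_seqlen_less_order:
  assumes "S \<subseteq> carrier G" "product_one_free G S \<alpha>"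
  shows "seqlen S \<alpha> < order G"
proof -
  have "seq_prod G S ` {\<beta>. \<beta> \<le> \<alpha>} \<subseteq> carrier G" using seq_prod_closed[OF assms(1)] by blast
  from card_mono[OF finite_carrier this] show ?thesis
    using seqlen_less_card_subseq_prods[OF assms] unfolding order_def by simp
qed

lemma product_one_free_atom_decr:
  assumes S: "S \<subseteq> carrier G" and x: "x \<in> atomsB G S" and "0 < x g"
  shows "product_one_free G S (x(g := x g - 1))"
proof -
  have le: "x(g := x g - 1) \<le> x" by (auto simp: le_fun_def)
  have "supp_on S x" and atom: "\<forall>\<beta>\<in>BG G S. \<beta> \<le> x \<longrightarrow> \<beta> = (\<lambda>_. 0) \<or> \<beta> = x"
    using x mem_atomsB_iff[OF S] mem_BG_iff by auto
  show ?thesis unfolding product_one_free_def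
  proof (intro conjI ballI impI)
    show "supp_on S (x(g := x g - 1))" using supp_on_le[OF \<open>supp_on S x\<close> le] .
    fix \<beta> assume \<beta>: "\<beta> \<in> BG G S" "\<beta> \<le> x(g := x g - 1)"
    then have "\<beta> \<noteq> x" using \<open>0 < x g\<close> by (auto simp: le_fun_def dest: spec[of _ g])
    then show "\<beta> = (\<lambda>_. 0)" using atom \<beta> le order_trans by blast
  qed
qed

text \<open>A nonzero proper product-one subsequence of the extended sequence, or its complement, misses
  the new term and hence lies in \<open>\<alpha>\<close>.\<close>
lemma atom_of_product_one_free:
  assumes \<alpha>: "product_one_free G (carrier G) \<alpha>" and h: "h = inv (seq_prod G (carrier G) \<alpha>)"
  shows "\<alpha>(h := Suc (\<alpha> h)) \<in> atomsB G (carrier G)"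
proof -
  let ?\<beta> = "\<alpha>(h := Suc (\<alpha> h))"
  have "h \<in> carrier G" using h seq_prod_closed by simp
  have small: "\<gamma> = (\<lambda>_. 0)" if "\<gamma> \<in> BG G (carrier G)" "\<gamma> \<le> \<alpha>" for \<gamma>
    using \<alpha> that by (auto simp: product_one_free_def)
  have "?\<beta> \<in> BG G (carrier G)"
    using \<alpha> seq_prod_incr[OF \<open>h \<in> carrier G\<close>] seq_prod_closed h
    by (auto simp: mem_BG_iff product_one_free_def supp_on_def)
  moreover have "\<gamma> = (\<lambda>_. 0) \<or> \<gamma> = ?\<beta>" if \<gamma>: "\<gamma> \<in> BG G (carrier G)" "\<gamma> \<le> ?\<beta>" for \<gamma>
  proof (cases "\<gamma> h \<le> \<alpha> h")
    case True
    then have "\<gamma> \<le> \<alpha>" using \<gamma>(2) by (auto simp: le_fun_def split: if_splits)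
    then show ?thesis using small \<gamma>(1) by blast
  next
    case False
    have "(\<lambda>g. ?\<beta> g - \<gamma> g) \<le> \<alpha>" using False by (auto simp: le_fun_def)
    then have "(\<lambda>g. ?\<beta> g - \<gamma> g) = (\<lambda>_. 0)"
      using small BG_diff[OF subset_refl \<open>?\<beta> \<in> BG G (carrier G)\<close> \<gamma>] by blast
    then have "?\<beta> \<le> \<gamma>" by (auto simp: fun_eq_iff le_fun_def)
    then show ?thesis using \<gamma>(2) antisym by blast
  qed
  moreover have "?\<beta> \<noteq> (\<lambda>_. 0)" by (auto dest: fun_cong[of _ _ h])
  ultimately show ?thesis using mem_atomsB_iff[OF subset_refl] by blast
qed

end

locale block_monoid = finite_comm_group +
  fixes G0 :: "'a set"
  assumes G0_subset: "G0 \<subseteq> carrier G"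
begin

lemma finite_G0: "finite G0"
  using finite_subset_carrier[OF G0_subset] .

lemma atom_supp_on: "x \<in> atomsB G G0 \<Longrightarrow> supp_on G0 x"
  by (auto simp: atomsB_def mem_BG_iff)

lemma small_d_eq_Max: "small_d G G0 = Max (seqlen G0 ` Collect (product_one_free G G0))"
proof -
  have "supp_on G0 \<alpha> \<and> \<not> (\<exists>\<gamma>\<in>atomsB G G0. \<gamma> \<le> \<alpha>) \<longleftrightarrow> product_one_free G G0 \<alpha>" for \<alpha>
  proof
    show "product_one_free G G0 \<alpha>" if "supp_on G0 \<alpha> \<and> \<not> (\<exists>\<gamma>\<in>atomsB G G0. \<gamma> \<le> \<alpha>)"
      using that product_one_free_iff_no_atom_le[OF G0_subset] by blast
    show "supp_on G0 \<alpha> \<and> \<not> (\<exists>\<gamma>\<in>atomsB G G0. \<gamma> \<le> \<alpha>)" if "product_one_free G G0 \<alpha>"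
    proof
      show "supp_on G0 \<alpha>" using that by (simp add: product_one_free_def)
      then show "\<not> (\<exists>\<gamma>\<in>atomsB G G0. \<gamma> \<le> \<alpha>)"
        using that product_one_free_iff_no_atom_le[OF G0_subset] by blast
    qed
  qed
  then show ?thesis
    unfolding small_d_def supp_on_def[symmetric] le_fun_def[symmetric] setcompr_eq_image by simp
qed

lemma finite_product_one_free_lengths: "finite (seqlen G0 ` Collect (product_one_free G G0))"
proof -
  have "seqlen G0 ` Collect (product_one_free G G0) \<subseteq> {..<order G}"
    using product_one_free_seqlen_less_order[OF G0_subset] by auto
  then show ?thesis using finite_subset by blast
qed

lemma seqlen_le_small_d: "product_one_free G G0 \<alpha> \<Longrightarrow> seqlen G0 \<alpha> \<le> small_d G G0"
  unfolding small_d_eq_Max by (rule Max_ge[OF finite_product_one_free_lengths]) simp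

lemma small_d_attained: "\<exists>\<alpha>. product_one_free G G0 \<alpha> \<and> seqlen G0 \<alpha> = small_d G G0"
proof -
  have "product_one_free G G0 (\<lambda>_. 0)"
    unfolding product_one_free_def supp_on_def by (simp add: le_fun_def fun_eq_iff)
  then have "seqlen G0 ` Collect (product_one_free G G0) \<noteq> {}" by blast
  from Max_in[OF finite_product_one_free_lengths this] obtain \<alpha>
    where "product_one_free G G0 \<alpha>" "Max (seqlen G0 ` Collect (product_one_free G G0)) = seqlen G0 \<alpha>"
    by auto
  then show ?thesis unfolding small_d_eq_Max by auto
qed

lemma small_d_less_order: "small_d G G0 < order G"
proof -
  obtain \<alpha> where "product_one_free G G0 \<alpha>" "seqlen G0 \<alpha> = small_d G G0"
    using small_d_attained by blast
  with product_one_free_seqlen_less_order[OF G0_subset this(1)] show ?thesis by simp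
qed

lemma exists_atom_le_if_small_d_less:
  assumes "supp_on G0 \<alpha>" "small_d G G0 < seqlen G0 \<alpha>"
  shows "\<exists>x\<in>atomsB G G0. x \<le> \<alpha>"
proof -
  have "\<not> product_one_free G G0 \<alpha>" using assms(2) seqlen_le_small_d leD by blast
  then show ?thesis using product_one_free_iff_no_atom_le[OF G0_subset assms(1)] by blast
qed

lemma seqlen_atom_le: 
  assumes x: "x \<in> atomsB G G0"
  shows "seqlen G0 x \<le> Suc (small_d G G0)"
proof -
  obtain g where "g \<in> G0" "0 < x g" using atom_nonzero[OF x] .
  then have "seqlen G0 x = Suc (seqlen G0 (x(g := x g - 1)))"
    using seqlen_decr[of G0 g x] finite_G0 by blast
  also have "seqlen G0 (x(g := x g - 1)) \<le> small_d G G0"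
    using seqlen_le_small_d product_one_free_atom_decr[OF G0_subset x \<open>0 < x g\<close>] by blast
  finally show ?thesis by simp
qed

lemma finite_atomsB: "finite (atomsB G G0)"
proof -
  have sub: "atomsB G G0 \<subseteq> {x. \<forall>g. (g \<in> G0 \<longrightarrow> x g \<in> {..Suc (small_d G G0)}) \<and> (g \<notin> G0 \<longrightarrow> x g = 0)}"
  proof (intro subsetI CollectI allI conjI impI)
    fix x g assume x: "x \<in> atomsB G G0"
    show "g \<notin> G0 \<Longrightarrow> x g = 0" using atom_supp_on[OF x] by (auto simp: supp_on_def)
    assume "g \<in> G0"
    then have "x g \<le> seqlen G0 x" unfolding seqlen_def using finite_G0 by (intro member_le_sum) auto
    then show "x g \<in> {..Suc (small_d G G0)}" using seqlen_atom_le[OF x] by simp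
  qed
  show ?thesis
    using finite_subset[OF sub finite_set_of_finite_funs[OF finite_G0 finite_atMost, of _ 0]] .
qed

lemma Suc_small_d_le_davenport: "Suc (small_d G G0) \<le> davenport G"
  and davenport_le_order: "davenport G \<le> order G"
proof -
  interpret full: block_monoid G "carrier G" by unfold_locales simp
  let ?D = "{seqlen (carrier G) \<alpha> | \<alpha>. \<alpha> \<in> atomsB G (carrier G)}"
  have bounded: "n \<le> Suc (small_d G (carrier G))" if "n \<in> ?D" for n
  proof -
    from that obtain \<beta> where "n = seqlen (carrier G) \<beta>" "\<beta> \<in> atomsB G (carrier G)" by blast
    then show ?thesis using full.seqlen_atom_le by simp
  qed
  then have "?D \<subseteq> {..Suc (small_d G (carrier G))}" by (simp add: subset_iff)
  then have fin: "finite ?D" using finite_subset by blast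
  obtain \<alpha> where \<alpha>: "product_one_free G G0 \<alpha>" "seqlen G0 \<alpha> = small_d G G0"
    using small_d_attained by blast
  define h where "h = inv (seq_prod G (carrier G) \<alpha>)"
  have "h \<in> carrier G" unfolding h_def using seq_prod_closed by simp
  have "product_one_free G (carrier G) \<alpha>"
    using product_one_free_superset[OF G0_subset subset_refl \<alpha>(1)] .
  then have atom: "\<alpha>(h := Suc (\<alpha> h)) \<in> atomsB G (carrier G)"
    using atom_of_product_one_free h_def by blast
  have "seqlen (carrier G) \<alpha> = small_d G G0"
    using seqlen_supp_subset[OF finite_carrier G0_subset] \<alpha> by (simp add: product_one_free_def)
  then have len: "seqlen (carrier G) (\<alpha>(h := Suc (\<alpha> h))) = Suc (small_d G G0)"
    using seqlen_incr[OF finite_carrier \<open>h \<in> carrier G\<close>] by simp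
  have "Suc (small_d G G0) \<in> ?D"
    using atom len by (intro CollectI exI[of _ "\<alpha>(h := Suc (\<alpha> h))"] conjI) simp_all
  then show "Suc (small_d G G0) \<le> davenport G"
    unfolding davenport_def using fin by simp
  have "n \<le> order G" if "n \<in> ?D" for n
    using bounded[OF that] full.small_d_less_order by simp
  then show "davenport G \<le> order G"
    unfolding davenport_def using fin \<open>Suc (small_d G G0) \<in> ?D\<close> by (intro Max.boundedI) auto
qed

end

definition fact_step :: "('a, 'b) monoid_scheme \<Rightarrow> 'a set \<Rightarrow> nat \<Rightarrow>
    (('a \<Rightarrow> nat) \<Rightarrow> nat) \<Rightarrow> (('a \<Rightarrow> nat) \<Rightarrow> nat) \<Rightarrow> bool" where
  "fact_step G G0 d \<phi> \<psi> \<longleftrightarrow> \<phi> \<in> factZ G G0 \<and> \<psi> \<in> factZ G G0 \<and>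
     fact_eval G G0 \<phi> = fact_eval G G0 \<psi> \<and> dgr G G0 \<phi> \<psi> \<le> d"

definition fact_connected :: "('a, 'b) monoid_scheme \<Rightarrow> 'a set \<Rightarrow> nat \<Rightarrow> ('a \<Rightarrow> nat) \<Rightarrow> bool" where
  "fact_connected G G0 d \<alpha> \<longleftrightarrow> (\<forall>\<phi>\<in>factZ G G0. \<forall>\<psi>\<in>factZ G G0.
     fact_eval G G0 \<phi> = \<alpha> \<longrightarrow> fact_eval G G0 \<psi> = \<alpha> \<longrightarrow> (fact_step G G0 d)\<^sup>*\<^sup>* \<phi> \<psi>)"

lemma rtranclp_fact_step_iff_chain:
  assumes "\<psi> \<in> factZ G G0"
  shows "(fact_step G G0 d)\<^sup>*\<^sup>* \<phi> \<psi> \<longleftrightarrow> (\<exists>k f. f 0 = \<phi> \<and> f k = \<psi> \<and> (\<forall>i\<le>k. f i \<in> factZ G G0) \<and>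
     (\<forall>i<k. fact_eval G G0 (f i) = fact_eval G G0 (f (Suc i)) \<and> dgr G G0 (f i) (f (Suc i)) \<le> d))"
  (is "_ \<longleftrightarrow> (\<exists>k f. ?chain k f)")
proof
  assume "(fact_step G G0 d)\<^sup>*\<^sup>* \<phi> \<psi>"
  then obtain k f where f: "f 0 = \<phi>" "f k = \<psi>" "\<forall>i<k. fact_step G G0 d (f i) (f (Suc i))"
    unfolding rtranclp_power relpowp_fun_conv by blast
  have "f i \<in> factZ G G0" if "i \<le> k" for i
    using that f(2,3) assms by (cases "i = k") (auto simp: fact_step_def)
  then have "?chain k f" using f by (auto simp: fact_step_def)
  then show "\<exists>k f. ?chain k f" by blast
next
  assume "\<exists>k f. ?chain k f"
  then obtain k f where "?chain k f" by blast
  then have "(fact_step G G0 d ^^ k) \<phi> \<psi>"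
    unfolding relpowp_fun_conv fact_step_def by (intro exI[of _ f]) auto
  then show "(fact_step G G0 d)\<^sup>*\<^sup>* \<phi> \<psi>" by (meson rtranclp_power)
qed

lemma gr_catenary_prop_iff: "gr_catenary_prop G G0 d \<longleftrightarrow> (\<forall>\<alpha>. fact_connected G G0 d \<alpha>)"
proof -
  have "gr_catenary_prop G G0 d \<longleftrightarrow> (\<forall>\<phi>\<in>factZ G G0. \<forall>\<psi>\<in>factZ G G0.
      fact_eval G G0 \<phi> = fact_eval G G0 \<psi> \<longrightarrow> (fact_step G G0 d)\<^sup>*\<^sup>* \<phi> \<psi>)"
    unfolding gr_catenary_prop_def by (simp add: rtranclp_fact_step_iff_chain cong: ball_cong)
  also have "\<dots> \<longleftrightarrow> (\<forall>\<alpha>. fact_connected G G0 d \<alpha>)"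
    unfolding fact_connected_def by blast
  finally show ?thesis .
qed

lemma dgr_add_right: "dgr G G0 (\<lambda>a. \<phi> a + \<chi> a) (\<lambda>a. \<psi> a + \<chi> a) = dgr G G0 \<phi> \<psi>"
proof -
  have "(\<lambda>a. \<phi> a + \<chi> a - min (\<phi> a + \<chi> a) (\<psi> a + \<chi> a)) = (\<lambda>a. \<phi> a - min (\<phi> a) (\<psi> a))"
    "(\<lambda>a. \<psi> a + \<chi> a - min (\<phi> a + \<chi> a) (\<psi> a + \<chi> a)) = (\<lambda>a. \<psi> a - min (\<phi> a) (\<psi> a))"
    by (auto simp: min_def)
  then show ?thesis unfolding dgr_def by simp
qed

lemma grlen_mono: "(\<And>a. \<phi> a \<le> \<psi> a) \<Longrightarrow> grlen G G0 \<phi> \<le> grlen G G0 \<psi>"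
  unfolding grlen_def by (intro sum_mono mult_right_mono) auto

lemma dgr_le_max_grlen: "dgr G G0 \<phi> \<psi> \<le> max (grlen G G0 \<phi>) (grlen G G0 \<psi>)"
  unfolding dgr_def by (intro max.mono grlen_mono) auto

lemma grlen_eq_seqlen_fact_eval: "grlen G G0 \<phi> = seqlen G0 (fact_eval G G0 \<phi>)"
  unfolding grlen_def seqlen_def fact_eval_def
  by (simp add: sum_distrib_left sum.swap[of _ G0] mult.assoc)

lemma fact_eval_add:
  "fact_eval G G0 (\<lambda>a. \<phi> a + \<psi> a) = (\<lambda>g. fact_eval G G0 \<phi> g + fact_eval G G0 \<psi> g)"
  unfolding fact_eval_def by (simp add: sum.distrib distrib_right)

lemma factZ_add: "\<phi> \<in> factZ G G0 \<Longrightarrow> \<psi> \<in> factZ G G0 \<Longrightarrow> (\<lambda>a. \<phi> a + \<psi> a) \<in> factZ G G0"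
  unfolding factZ_def by simp

lemma fact_step_add_right:
  "fact_step G G0 d \<phi> \<psi> \<Longrightarrow> \<chi> \<in> factZ G G0 \<Longrightarrow>
    fact_step G G0 d (\<lambda>a. \<phi> a + \<chi> a) (\<lambda>a. \<psi> a + \<chi> a)"
  by (simp add: fact_step_def factZ_add fact_eval_add dgr_add_right)

lemma rtranclp_fact_step_add_right:
  assumes "(fact_step G G0 d)\<^sup>*\<^sup>* \<phi> \<psi>" "\<chi> \<in> factZ G G0"
  shows "(fact_step G G0 d)\<^sup>*\<^sup>* (\<lambda>a. \<phi> a + \<chi> a) (\<lambda>a. \<psi> a + \<chi> a)"
  using assms(1)
proof (induction rule: rtranclp_induct)
  case (step \<psi> \<psi>')
  then show ?case using fact_step_add_right[OF _ assms(2)] by (simp add: rtranclp.rtrancl_into_rtrancl)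
qed simp

lemma fact_connected_if_seqlen_le:
  assumes "seqlen G0 \<alpha> \<le> d"
  shows "fact_connected G G0 d \<alpha>"
  unfolding fact_connected_def
proof (intro ballI impI)
  fix \<phi> \<psi> assume "\<phi> \<in> factZ G G0" "\<psi> \<in> factZ G G0" "fact_eval G G0 \<phi> = \<alpha>" "fact_eval G G0 \<psi> = \<alpha>"
  moreover have "dgr G G0 \<phi> \<psi> \<le> d"
    using dgr_le_max_grlen[of G G0 \<phi> \<psi>] assms calculation(3,4)
    by (simp add: grlen_eq_seqlen_fact_eval)
  ultimately show "(fact_step G G0 d)\<^sup>*\<^sup>* \<phi> \<psi>" by (intro r_into_rtranclp) (simp add: fact_step_def)
qed

context block_monoid
begin

lemma fact_eval_single:
  assumes "x \<in> atomsB G G0"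
  shows "fact_eval G G0 ((\<lambda>_. 0)(x := 1)) = x"
proof -
  have "(\<Sum>a\<in>atomsB G G0. ((\<lambda>_. 0)(x := 1)) a * a g) = x g" for g
  proof -
    have "(\<Sum>a\<in>atomsB G G0. ((\<lambda>_. 0)(x := 1)) a * a g) = (\<Sum>a\<in>atomsB G G0. if a = x then x g else 0)"
      by (intro sum.cong) auto
    then show ?thesis using finite_atomsB assms by simp
  qed
  then show ?thesis unfolding fact_eval_def by auto
qed

lemma single_mem_factZ: "x \<in> atomsB G G0 \<Longrightarrow> (\<lambda>_. 0)(x := 1) \<in> factZ G G0"
  unfolding factZ_def by simp

lemma factZ_remove_atom:
  assumes "\<phi> \<in> factZ G G0" "0 < \<phi> x"
  shows "x \<in> atomsB G G0" "\<phi>(x := \<phi> x - 1) \<in> factZ G G0"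
    and "\<phi> = (\<lambda>a. (\<phi>(x := \<phi> x - 1)) a + ((\<lambda>_. 0)(x := 1)) a)"
proof -
  show "x \<in> atomsB G G0" using assms by (auto simp: factZ_def)
  show "\<phi>(x := \<phi> x - 1) \<in> factZ G G0" using assms(1) by (simp add: factZ_def)
  show "\<phi> = (\<lambda>a. (\<phi>(x := \<phi> x - 1)) a + ((\<lambda>_. 0)(x := 1)) a)" using assms(2) by (intro ext) auto
qed

lemma fact_eval_remove_atom:
  assumes "\<phi> \<in> factZ G G0" "0 < \<phi> x"
  shows "fact_eval G G0 \<phi> = (\<lambda>g. fact_eval G G0 (\<phi>(x := \<phi> x - 1)) g + x g)"
proof -
  note decomp = factZ_remove_atom[OF assms]
  have "fact_eval G G0 \<phi> = fact_eval G G0 (\<lambda>a. (\<phi>(x := \<phi> x - 1)) a + ((\<lambda>_. 0)(x := 1)) a)"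
    using decomp(3) by (rule arg_cong)
  also have "\<dots> = (\<lambda>g. fact_eval G G0 (\<phi>(x := \<phi> x - 1)) g + x g)"
    by (simp only: fact_eval_add fact_eval_single[OF decomp(1)])
  finally show ?thesis .
qed

lemma atom_le_fact_eval:
  assumes "\<phi> \<in> factZ G G0" "0 < \<phi> x"
  shows "x \<le> fact_eval G G0 \<phi>"
  using fact_eval_remove_atom[OF assms] by (simp add: le_fun_def)

lemma fact_eval_mem_BG: "\<phi> \<in> factZ G G0 \<Longrightarrow> fact_eval G G0 \<phi> \<in> BG G G0"
proof (induction "sum \<phi> (atomsB G G0)" arbitrary: \<phi> rule: less_induct)
  case less
  show ?case
  proof (cases "\<phi> = (\<lambda>_. 0)")
    case True
    then show ?thesis by (simp add: fact_eval_def mem_BG_iff supp_on_def seq_prod_zero)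
  next
    case False
    then obtain x where "0 < \<phi> x" by (auto simp: fun_eq_iff)
    note decomp = factZ_remove_atom[OF less.prems this]
    have "sum (\<phi>(x := \<phi> x - 1)) (atomsB G G0) < sum \<phi> (atomsB G G0)"
      using \<open>0 < \<phi> x\<close> decomp(1) finite_atomsB by (intro sum_strict_mono_ex1) auto
    then have "fact_eval G G0 (\<phi>(x := \<phi> x - 1)) \<in> BG G G0"
      using less.hyps decomp(2) by blast
    then show ?thesis
      using fact_eval_remove_atom[OF less.prems \<open>0 < \<phi> x\<close>] BG_add[OF G0_subset] decomp(1)
      by (simp add: atomsB_def)
  qed
qed

lemma exists_factorization: "\<alpha> \<in> BG G G0 \<Longrightarrow> \<exists>\<phi>\<in>factZ G G0. fact_eval G G0 \<phi> = \<alpha>"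
proof (induction "seqlen G0 \<alpha>" arbitrary: \<alpha> rule: less_induct)
  case less
  show ?case
  proof (cases "\<alpha> = (\<lambda>_. 0)")
    case True
    then show ?thesis by (intro bexI[of _ "\<lambda>_. 0"]) (auto simp: fact_eval_def factZ_def)
  next
    case False
    then obtain x where x: "x \<in> atomsB G G0" "x \<le> \<alpha>"
      using exists_atom_le[OF G0_subset less.prems] by blast
    have "x \<noteq> (\<lambda>_. 0)" using x(1) by (simp add: atomsB_def)
    then have "0 < seqlen G0 x" using seqlen_eq_0_iff[OF finite_G0 atom_supp_on[OF x(1)]] by simp
    then have "seqlen G0 (\<lambda>g. \<alpha> g - x g) < seqlen G0 \<alpha>"
      using seqlen_diff[OF finite_G0 x(2)] seqlen_mono[OF x(2), of G0] by simp
    moreover have "(\<lambda>g. \<alpha> g - x g) \<in> BG G G0"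
      using BG_diff[OF G0_subset less.prems _ x(2)] x(1) by (simp add: atomsB_def)
    ultimately obtain \<psi> where \<psi>: "\<psi> \<in> factZ G G0" "fact_eval G G0 \<psi> = (\<lambda>g. \<alpha> g - x g)"
      using less.hyps by blast
    have "fact_eval G G0 (\<lambda>a. \<psi> a + ((\<lambda>_. 0)(x := 1)) a) = \<alpha>"
      unfolding fact_eval_add \<psi>(2) fact_eval_single[OF x(1)] using x(2) by (auto simp: le_fun_def)
    then show ?thesis using factZ_add[OF \<psi>(1) single_mem_factZ[OF x(1)]] by blast
  qed
qed

lemma factorization_extends:
  assumes "\<alpha> \<in> BG G G0" "\<phi> \<in> factZ G G0" "fact_eval G G0 \<phi> \<le> \<alpha>"
  shows "\<exists>\<chi>\<in>factZ G G0. fact_eval G G0 \<chi> = \<alpha> \<and> \<phi> \<le> \<chi>"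
proof -
  have "(\<lambda>g. \<alpha> g - fact_eval G G0 \<phi> g) \<in> BG G G0"
    using BG_diff[OF G0_subset assms(1) fact_eval_mem_BG[OF assms(2)] assms(3)] .
  then obtain \<psi> where \<psi>: "\<psi> \<in> factZ G G0" "fact_eval G G0 \<psi> = (\<lambda>g. \<alpha> g - fact_eval G G0 \<phi> g)"
    using exists_factorization by blast
  have "fact_eval G G0 (\<lambda>a. \<phi> a + \<psi> a) = \<alpha>"
    using assms(3) by (auto simp: fact_eval_add \<psi>(2) le_fun_def)
  moreover have "\<phi> \<le> (\<lambda>a. \<phi> a + \<psi> a)" by (simp add: le_fun_def)
  ultimately show ?thesis using factZ_add[OF assms(2) \<psi>(1)] by blast
qed

end

locale catenary_induction = block_monoid +
  fixes d :: nat and \<alpha> :: "'a \<Rightarrow> nat"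
  assumes \<alpha>_mem_BG: "\<alpha> \<in> BG G G0"
    and shorter_connected: "\<And>\<beta>. seqlen G0 \<beta> < seqlen G0 \<alpha> \<Longrightarrow> fact_connected G G0 d \<beta>"
begin

lemma reach_if_common_atom:
  assumes \<phi>: "\<phi> \<in> factZ G G0" "fact_eval G G0 \<phi> = \<alpha>" "0 < \<phi> x"
    and \<psi>: "\<psi> \<in> factZ G G0" "fact_eval G G0 \<psi> = \<alpha>" "0 < \<psi> x"
  shows "(fact_step G G0 d)\<^sup>*\<^sup>* \<phi> \<psi>"
proof -
  let ?\<phi>' = "\<phi>(x := \<phi> x - 1)" and ?\<psi>' = "\<psi>(x := \<psi> x - 1)"
  note \<phi>_decomp = factZ_remove_atom[OF \<phi>(1,3)] and \<psi>_decomp = factZ_remove_atom[OF \<psi>(1,3)]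
  have \<phi>_eval: "\<alpha> = (\<lambda>g. fact_eval G G0 ?\<phi>' g + x g)"
    using fact_eval_remove_atom[OF \<phi>(1,3)] \<phi>(2) by simp
  have "\<alpha> = (\<lambda>g. fact_eval G G0 ?\<psi>' g + x g)"
    using fact_eval_remove_atom[OF \<psi>(1,3)] \<psi>(2) by simp
  then have same_eval: "fact_eval G G0 ?\<phi>' = fact_eval G G0 ?\<psi>'"
    using \<phi>_eval by (intro ext) (metis add_right_cancel)
  have "x \<noteq> (\<lambda>_. 0)" using \<phi>_decomp(1) by (simp add: atomsB_def)
  then have "0 < seqlen G0 x" using seqlen_eq_0_iff[OF finite_G0 atom_supp_on[OF \<phi>_decomp(1)]] by simp
  moreover have "seqlen G0 \<alpha> = seqlen G0 (fact_eval G G0 ?\<phi>') + seqlen G0 x"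
    by (subst \<phi>_eval) (rule seqlen_add[OF finite_G0])
  ultimately have "fact_connected G G0 d (fact_eval G G0 ?\<phi>')"
    by (intro shorter_connected) simp
  then have "(fact_step G G0 d)\<^sup>*\<^sup>* ?\<phi>' ?\<psi>'"
    using \<phi>_decomp(2) \<psi>_decomp(2) same_eval by (simp add: fact_connected_def)
  from rtranclp_fact_step_add_right[OF this single_mem_factZ[OF \<phi>_decomp(1)]]
  show ?thesis using \<phi>_decomp(3) \<psi>_decomp(3) by simp
qed

definition linked :: "('a \<Rightarrow> nat) \<Rightarrow> ('a \<Rightarrow> nat) \<Rightarrow> bool" where
  "linked x y \<longleftrightarrow> (\<forall>\<phi>\<in>factZ G G0. \<forall>\<psi>\<in>factZ G G0. fact_eval G G0 \<phi> = \<alpha> \<longrightarrow>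
     fact_eval G G0 \<psi> = \<alpha> \<longrightarrow> 0 < \<phi> x \<longrightarrow> 0 < \<psi> y \<longrightarrow> (fact_step G G0 d)\<^sup>*\<^sup>* \<phi> \<psi>)"

lemma linked_trans:
  assumes xy: "linked x y" and yz: "linked y z" and y: "y \<in> atomsB G G0" "y \<le> \<alpha>"
  shows "linked x z"
proof -
  have "fact_eval G G0 ((\<lambda>_. 0)(y := 1)) \<le> \<alpha>" using y(2) by (simp only: fact_eval_single[OF y(1)])
  from factorization_extends[OF \<alpha>_mem_BG single_mem_factZ[OF y(1)] this] obtain \<chi>
    where \<chi>: "\<chi> \<in> factZ G G0" "fact_eval G G0 \<chi> = \<alpha>" "(\<lambda>_. 0)(y := 1) \<le> \<chi>" by blast
  have "0 < \<chi> y" using le_funD[OF \<chi>(3), of y] by simp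
  show ?thesis unfolding linked_def
  proof (intro ballI impI)
    fix \<phi> \<psi> assume "\<phi> \<in> factZ G G0" "\<psi> \<in> factZ G G0" "fact_eval G G0 \<phi> = \<alpha>"
      "fact_eval G G0 \<psi> = \<alpha>" "0 < \<phi> x" "0 < \<psi> z"
    then have "(fact_step G G0 d)\<^sup>*\<^sup>* \<phi> \<chi>" "(fact_step G G0 d)\<^sup>*\<^sup>* \<chi> \<psi>"
      using xy yz \<chi>(1,2) \<open>0 < \<chi> y\<close> unfolding linked_def by blast+
    then show "(fact_step G G0 d)\<^sup>*\<^sup>* \<phi> \<psi>" by (rule rtranclp_trans)
  qed
qed

lemma linked_if_add_le:
  assumes x: "x \<in> atomsB G G0" and y: "y \<in> atomsB G G0" and le: "(\<lambda>g. x g + y g) \<le> \<alpha>"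
  shows "linked x y"
proof -
  let ?\<phi> = "\<lambda>a. ((\<lambda>_. 0)(x := 1)) a + ((\<lambda>_. 0)(y := 1)) a"
  have "?\<phi> \<in> factZ G G0" using factZ_add[OF single_mem_factZ[OF x] single_mem_factZ[OF y]] .
  moreover have "fact_eval G G0 ?\<phi> \<le> \<alpha>"
    using le by (simp only: fact_eval_add fact_eval_single[OF x] fact_eval_single[OF y])
  ultimately obtain \<chi> where \<chi>: "\<chi> \<in> factZ G G0" "fact_eval G G0 \<chi> = \<alpha>" "?\<phi> \<le> \<chi>"
    using factorization_extends[OF \<alpha>_mem_BG] by blast
  have "0 < \<chi> x" "0 < \<chi> y" using le_funD[OF \<chi>(3), of x] le_funD[OF \<chi>(3), of y] by simp_all
  show ?thesis unfolding linked_def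
  proof (intro ballI impI)
    fix \<phi> \<psi> assume "\<phi> \<in> factZ G G0" "\<psi> \<in> factZ G G0" "fact_eval G G0 \<phi> = \<alpha>"
      "fact_eval G G0 \<psi> = \<alpha>" "0 < \<phi> x" "0 < \<psi> y"
    then have "(fact_step G G0 d)\<^sup>*\<^sup>* \<phi> \<chi>" "(fact_step G G0 d)\<^sup>*\<^sup>* \<chi> \<psi>"
      using reach_if_common_atom \<chi>(1,2) \<open>0 < \<chi> x\<close> \<open>0 < \<chi> y\<close> by blast+
    then show "(fact_step G G0 d)\<^sup>*\<^sup>* \<phi> \<psi>" by (rule rtranclp_trans)
  qed
qed

text \<open>The link goes through an atom of the complement \<open>\<alpha> - \<epsilon>\<close>, which is longer than \<open>d(G\<^sub>0)\<close>.\<close>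
lemma linked_if_le_window:
  assumes long: "2 * small_d G G0 + 3 \<le> seqlen G0 \<alpha>"
    and x: "x \<in> atomsB G G0" "x \<le> \<epsilon>" and y: "y \<in> atomsB G G0" "y \<le> \<epsilon>"
    and \<epsilon>: "\<epsilon> \<le> \<alpha>" "seqlen G0 \<epsilon> \<le> small_d G G0 + 2"
  shows "linked x y"
proof -
  have supp_\<alpha>: "supp_on G0 \<alpha>" using \<alpha>_mem_BG by (simp add: mem_BG_iff)
  have "small_d G G0 < seqlen G0 (\<lambda>g. \<alpha> g - \<epsilon> g)"
    using seqlen_diff[OF finite_G0 \<epsilon>(1)] long \<epsilon>(2) by simp
  then obtain w where w: "w \<in> atomsB G G0" "w \<le> (\<lambda>g. \<alpha> g - \<epsilon> g)"
    using exists_atom_le_if_small_d_less supp_on_diff[OF supp_\<alpha>] by blast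
  have "x g + w g \<le> \<alpha> g \<and> w g + y g \<le> \<alpha> g \<and> w g \<le> \<alpha> g" for g
    using le_funD[OF x(2), of g] le_funD[OF y(2), of g] le_funD[OF w(2), of g] le_funD[OF \<epsilon>(1), of g]
    by arith
  then have "(\<lambda>g. x g + w g) \<le> \<alpha>" "(\<lambda>g. w g + y g) \<le> \<alpha>" "w \<le> \<alpha>"
    by (simp_all add: le_fun_def)
  then show ?thesis
    using linked_trans linked_if_add_le x(1) y(1) w(1) by blast
qed

lemma linked_if_le_windows:
  assumes long: "2 * small_d G G0 + 3 \<le> seqlen G0 \<alpha>"
    and \<gamma>: "\<gamma> \<le> \<alpha>" "seqlen G0 \<gamma> = Suc (small_d G G0)" and x: "x \<in> atomsB G G0" "x \<le> \<gamma>"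
    and \<gamma>': "\<gamma>' \<le> \<alpha>" "seqlen G0 \<gamma>' = Suc (small_d G G0)" and y: "y \<in> atomsB G G0" "y \<le> \<gamma>'"
  shows "linked x y"
  using \<gamma> x
proof (induction "seqlen G0 (\<lambda>g. \<gamma> g - \<gamma>' g)" arbitrary: \<gamma> x rule: less_induct)
  case less
  have supp_\<alpha>: "supp_on G0 \<alpha>" using \<alpha>_mem_BG by (simp add: mem_BG_iff)
  show ?case
  proof (cases "\<gamma> \<le> \<gamma>'")
    case True
    have "x \<le> \<gamma>'" using less.prems(4) True by (rule order_trans)
    from linked_if_le_window[OF long less.prems(3) this y \<gamma>'(1)] show ?thesis
      using \<gamma>'(2) by simp
  next
    case False
    then obtain \<gamma>1 \<epsilon> where step: "\<gamma> \<le> \<epsilon>" "\<gamma>1 \<le> \<epsilon>" "\<epsilon> \<le> \<alpha>" "seqlen G0 \<epsilon> = Suc (seqlen G0 \<gamma>)"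
        "seqlen G0 \<gamma>1 = seqlen G0 \<gamma>" "seqlen G0 (\<lambda>g. \<gamma>1 g - \<gamma>' g) < seqlen G0 (\<lambda>g. \<gamma> g - \<gamma>' g)"
      using exists_exchange_step[OF finite_G0 supp_\<alpha> less.prems(1) \<gamma>'(1)] less.prems(2) \<gamma>'(2)
      by auto
    have "\<gamma>1 \<le> \<alpha>" using step(2,3) by (rule order_trans)
    have len1: "seqlen G0 \<gamma>1 = Suc (small_d G G0)" using step(5) less.prems(2) by simp
    then obtain x1 where x1: "x1 \<in> atomsB G G0" "x1 \<le> \<gamma>1"
      using exists_atom_le_if_small_d_less[OF supp_on_le[OF supp_\<alpha> \<open>\<gamma>1 \<le> \<alpha>\<close>]] by auto
    have "x \<le> \<epsilon>" "x1 \<le> \<epsilon>" "x1 \<le> \<alpha>"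
      using order_trans[OF less.prems(4) step(1)] order_trans[OF x1(2) step(2)]
        order_trans[OF x1(2) \<open>\<gamma>1 \<le> \<alpha>\<close>] by simp_all
    have "linked x x1"
      using linked_if_le_window[OF long less.prems(3) \<open>x \<le> \<epsilon>\<close> x1(1) \<open>x1 \<le> \<epsilon>\<close> step(3)]
        step(4) less.prems(2) by simp
    moreover have "linked x1 y" using less.hyps[OF step(6) \<open>\<gamma>1 \<le> \<alpha>\<close> len1 x1] .
    ultimately show ?thesis using linked_trans x1(1) \<open>x1 \<le> \<alpha>\<close> by blast
  qed
qed

lemma fact_connected_if_long:
  assumes long: "2 * small_d G G0 + 3 \<le> seqlen G0 \<alpha>"
  shows "fact_connected G G0 d \<alpha>"
  unfolding fact_connected_def
proof (intro ballI impI)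
  fix \<phi> \<psi> assume \<phi>: "\<phi> \<in> factZ G G0" "fact_eval G G0 \<phi> = \<alpha>"
    and \<psi>: "\<psi> \<in> factZ G G0" "fact_eval G G0 \<psi> = \<alpha>"
  have supp_\<alpha>: "supp_on G0 \<alpha>" using \<alpha>_mem_BG by (simp add: mem_BG_iff)
  have "\<alpha> \<noteq> (\<lambda>_. 0)" using long by (auto simp: seqlen_def)
  then have "\<phi> \<noteq> (\<lambda>_. 0)" "\<psi> \<noteq> (\<lambda>_. 0)" using \<phi>(2) \<psi>(2) by (auto simp: fact_eval_def)
  then obtain x y where "0 < \<phi> x" "0 < \<psi> y" by (auto simp: fun_eq_iff)
  have x: "x \<in> atomsB G G0" "x \<le> \<alpha>"
    using factZ_remove_atom(1)[OF \<phi>(1) \<open>0 < \<phi> x\<close>] atom_le_fact_eval[OF \<phi>(1) \<open>0 < \<phi> x\<close>] \<phi>(2)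
    by simp_all
  have y: "y \<in> atomsB G G0" "y \<le> \<alpha>"
    using factZ_remove_atom(1)[OF \<psi>(1) \<open>0 < \<psi> y\<close>] atom_le_fact_eval[OF \<psi>(1) \<open>0 < \<psi> y\<close>] \<psi>(2)
    by simp_all
  have "Suc (small_d G G0) \<le> seqlen G0 \<alpha>" using long by simp
  obtain \<gamma> where \<gamma>: "x \<le> \<gamma>" "\<gamma> \<le> \<alpha>" "seqlen G0 \<gamma> = Suc (small_d G G0)"
    using exists_between_of_seqlen[OF finite_G0 supp_\<alpha> x(2) seqlen_atom_le[OF x(1)]
        \<open>Suc (small_d G G0) \<le> seqlen G0 \<alpha>\<close>] by blast
  obtain \<gamma>' where \<gamma>': "y \<le> \<gamma>'" "\<gamma>' \<le> \<alpha>" "seqlen G0 \<gamma>' = Suc (small_d G G0)"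
    using exists_between_of_seqlen[OF finite_G0 supp_\<alpha> y(2) seqlen_atom_le[OF y(1)]
        \<open>Suc (small_d G G0) \<le> seqlen G0 \<alpha>\<close>] by blast
  have "linked x y" using linked_if_le_windows[OF long \<gamma>(2,3) x(1) \<gamma>(1) \<gamma>'(2,3) y(1) \<gamma>'(1)] .
  then show "(fact_step G G0 d)\<^sup>*\<^sup>* \<phi> \<psi>"
    using \<phi> \<psi> \<open>0 < \<phi> x\<close> \<open>0 < \<psi> y\<close> unfolding linked_def by blast
qed

end

lemma (in block_monoid) fact_connected_twice_small_d_plus_2:
  "fact_connected G G0 (2 * small_d G G0 + 2) \<alpha>"
proof (induction "seqlen G0 \<alpha>" arbitrary: \<alpha> rule: less_induct)
  case less
  show ?case
  proof (cases "\<alpha> \<in> BG G G0")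
    case False
    then show ?thesis using fact_eval_mem_BG by (auto simp: fact_connected_def)
  next
    case True
    interpret catenary_induction G G0 "2 * small_d G G0 + 2" \<alpha>
      using True less by unfold_locales
    show ?thesis
      using fact_connected_if_seqlen_le fact_connected_if_long
      by (cases "seqlen G0 \<alpha> \<le> 2 * small_d G G0 + 2") auto
  qed
qed

theorem corollary6p4:
  fixes G :: "('a, 'b) monoid_scheme" and G0 :: "'a set"
  assumes "comm_group G" and "finite (carrier G)" and "G0 \<subseteq> carrier G"
  shows "(\<exists>d. gr_catenary_prop G G0 d)
       \<and> cgr G G0 \<le> 2 * small_d G G0 + 2
       \<and> 2 * small_d G G0 + 2 \<le> 2 * davenport G
       \<and> 2 * davenport G \<le> 2 * order G"
proof -
  interpret block_monoid G G0
    using assms by (simp add: block_monoid_def block_monoid_axioms_def finite_comm_group_def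
        finite_comm_group_axioms_def)
  have catenary: "gr_catenary_prop G G0 (2 * small_d G G0 + 2)"
    using fact_connected_twice_small_d_plus_2 gr_catenary_prop_iff by blast
  then have "cgr G G0 \<le> 2 * small_d G G0 + 2"
    unfolding cgr_def by (rule Least_le)
  then show ?thesis
    using catenary Suc_small_d_le_davenport davenport_le_order by auto
qed

end
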